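(* Let $n\ge1$, $\nu>2$, $X\sim t^{\mathrm{std}}_\nu(0,I_n)$, and $W=\frac{\nu+n}{\nu-2+X'X}$. For real $p,q$ let $$\zeta_{p,q}=\Big(\frac{\nu+n}{\nu-2}\Big)^{p/2}\Big(\frac{\nu-2}{2}\Big)^{q/2}\frac{\Gamma(\frac{\nu+n}2)}{\Gamma(\frac\nu2)}\frac{\Gamma(\frac{\nu+p-q}2)}{\Gamma(\frac{\nu+p+n}2)}.$$ (i) For any $p>2-\nu$ and any measurable $g:\mathbb R^n\to\mathbb R$ with $\mathbb E|g(Y)|<\infty$, where $Y\sim t^{\mathrm{std}}_{\nu+p}\big(0,\frac{\nu-2}{\nu+p-2}I_n\big)$, we have $\mathbb E[W^{p/2}g(X)]=\zeta_{p,0}\,\mathbb E[g(Y)]$. (ii) If moreover $g$ is homogeneous of degree $q<\nu+p$ (i.e. $g(cx)=c^qg(x)$ for all $c>0$) and $\mathbb E|g(\tilde Z)|<\infty$ for $\tilde Z\sim N(0,I_n)$, then $\mathbb E[W^{p/2}g(X)]=\zeta_{p,q}\,\mathbb E[g(\tilde Z)]$.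
   Context: For $\nu>2$ and positive definite $\Sigma$ ($n\times n$), the scaled multivariate $t$-distribution $t^{\mathrm{std}}_\nu(0,\Sigma)$ has density $\frac{\Gamma((\nu+n)/2)}{\Gamma(\nu/2)}[(\nu-2)\pi]^{-n/2}|\Sigma|^{-1/2}[1+\tfrac1{\nu-2}y'\Sigma^{-1}y]^{-(\nu+n)/2}$ on $\mathbb R^n$. *)

theory Defs
  imports "HOL-Analysis.Analysis"
begin

definition t_std_density :: "real \<Rightarrow> real^'n^'n \<Rightarrow> real^'n \<Rightarrow> real" where
  "t_std_density nu S y =
     Gamma ((nu + real CARD('n)) / 2) / Gamma (nu / 2)
     * ((nu - 2) * pi) powr (- real CARD('n) / 2)
     * (det S) powr (-1/2)
     * (1 + (y \<bullet> (matrix_inv S *v y)) / (nu - 2)) powr (- (nu + real CARD('n)) / 2)"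

definition t_std :: "real \<Rightarrow> real^'n^'n \<Rightarrow> (real^'n) measure" where
  "t_std nu S = density lborel (\<lambda>y. ennreal (t_std_density nu S y))"

definition std_normal_vec_density :: "real^'n \<Rightarrow> real" where
  "std_normal_vec_density x = (2 * pi) powr (- real CARD('n) / 2) * exp (- (x \<bullet> x) / 2)"

definition std_normal_vec :: "(real^'n) measure" where
  "std_normal_vec = density lborel (\<lambda>x. ennreal (std_normal_vec_density x))"

definition zeta :: "real \<Rightarrow> nat \<Rightarrow> real \<Rightarrow> real \<Rightarrow> real" where
  "zeta nu n p q =
     ((nu + real n) / (nu - 2)) powr (p / 2) * ((nu - 2) / 2) powr (q / 2)
     * (Gamma ((nu + real n) / 2) / Gamma (nu / 2))
     * (Gamma ((nu + p - q) / 2) / Gamma ((nu + p + real n) / 2))"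

end

theory Submission
  imports Defs
begin

(* The weight W^(p/2) times the t_nu density is pointwise zeta_(p,0) times the density of
   Y ~ t_(nu+p)(0, (nu-2)/(nu+p-2) I), so (i) is a change of density.
   For (ii), Gamma(a) (1 + |y|^2/D)^(-a) = int_0^oo t^(a-1) e^(-t) e^(-t |y|^2/D) dt writes the
   kernel of a scaled t-distribution as a Gamma mixture of centred Gaussians. By Tonelli and the
   homogeneity of g, the Gaussian of variance D/(2t) contributes (D/(2t))^((n+q)/2) E g(Z), and the
   remaining integral over t is again a Gamma integral. Positive and negative parts of g are treated
   separately. *)

lemma matrix_inv_scaleR_mat_1:
  fixes c :: real
  assumes "c \<noteq> 0"
  shows "matrix_inv (c *\<^sub>R mat 1 :: real^'n^'n) = (1 / c) *\<^sub>R mat 1"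
proof -
  let ?A = "c *\<^sub>R mat 1 :: real^'n^'n" and ?B = "(1 / c) *\<^sub>R mat 1 :: real^'n^'n"
  have inverse: "?A ** ?B = mat 1" "?B ** ?A = mat 1"
    using assms by (simp_all add: matrix_scalar_ac)
  then have inv: "?A ** matrix_inv ?A = mat 1 \<and> matrix_inv ?A ** ?A = mat 1"
    unfolding matrix_inv_def by (rule someI[of _ ?B, OF conjI])
  have "matrix_inv ?A = (?B ** ?A) ** matrix_inv ?A"
    using inverse by simp
  also have "\<dots> = ?B"
    using inv by (simp add: matrix_mul_assoc[symmetric])
  finally show ?thesis .
qed

lemma det_scaleR_mat_1: "det (c *\<^sub>R mat 1 :: real^'n^'n) = c ^ CARD('n)"
proof -
  have "(c *\<^sub>R mat 1 :: real^'n^'n) = matrix ((*\<^sub>R) c)"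
    by (simp add: matrix_scaleR vec_eq_iff mat_def)
  then show ?thesis by simp
qed

lemma t_std_density_scaleR_mat_1:
  fixes c nu :: real
  assumes "nu > 2" "c > 0"
  shows "t_std_density nu (c *\<^sub>R mat 1 :: real^'n^'n) y
    = Gamma ((nu + real CARD('n)) / 2) / Gamma (nu / 2) * (c * (nu - 2) * pi) powr (- (real CARD('n) / 2))
      * (1 + y \<bullet> y / (c * (nu - 2))) powr (- ((nu + real CARD('n)) / 2))"
proof -
  have "(c ^ CARD('n)) powr (-1/2) = c powr (- (real CARD('n) / 2))"
    using assms by (simp add: powr_realpow[symmetric] powr_powr)
  moreover have "y \<bullet> (matrix_inv (c *\<^sub>R mat 1 :: real^'n^'n) *v y) = y \<bullet> y / c"
    using assms by (simp add: matrix_inv_scaleR_mat_1 scaleR_matrix_vector_assoc[symmetric])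
  ultimately show ?thesis
    using assms unfolding t_std_density_def det_scaleR_mat_1 minus_divide_left[symmetric]
    by (simp add: powr_mult mult_ac)
qed

lemma nn_integral_Gamma_kernel:
  fixes a c :: real
  assumes "a > 0" "c > 0"
  shows "(\<integral>\<^sup>+t. ennreal (indicator {0..} t * t powr (a - 1) * exp (- c * t)) \<partial>lborel)
    = ennreal (Gamma a * c powr (- a))"
proof -
  have "(\<integral>\<^sup>+t. ennreal (indicator {0..} t * t powr (a - 1) * exp (- c * t)) \<partial>lborel)
      = ennreal (1 / c) * (\<integral>\<^sup>+t. ennreal (indicator {0..} (t / c) * (t / c) powr (a - 1) * exp (- t)) \<partial>lborel)"
    using assms by (subst nn_integral_real_affine[of _ "1 / c" 0]) auto
  also have "\<dots> = ennreal (1 / c) * (\<integral>\<^sup>+t. ennreal (c powr (1 - a)) * ennreal (indicator {0..} t * t powr (a - 1) / exp t) \<partial>lborel)"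
    using assms
    by (intro arg_cong2[where f = "(*)"] nn_integral_cong)
       (auto simp: indicator_def ennreal_mult'[symmetric] powr_divide powr_diff exp_minus field_simps)
  also have "\<dots> = ennreal (1 / c) * ennreal (c powr (1 - a)) * ennreal (Gamma a)"
    using assms by (simp add: nn_integral_cmult Gamma_conv_nn_integral_real mult.assoc)
  also have "\<dots> = ennreal (Gamma a * c powr (- a))"
    using assms
    by (simp add: ennreal_mult'[symmetric] powr_diff powr_minus field_simps)
  finally show ?thesis .
qed

lemma Gamma_mult_powr_conv_nn_integral:
  fixes a u :: real
  assumes "a > 0" "u > -1"
  shows "ennreal (Gamma a * (1 + u) powr (- a))
    = (\<integral>\<^sup>+t. ennreal (indicator {0..} t * t powr (a - 1) * exp (- t) * exp (- u * t)) \<partial>lborel)"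
proof -
  have "exp (- (1 + u) * t) = exp (- t) * exp (- u * t)" for t
    by (simp add: mult_exp_exp algebra_simps)
  with nn_integral_Gamma_kernel[of a "1 + u"] assms show ?thesis
    by (simp add: mult.assoc)
qed

lemma nn_integral_lborel_scaleR:
  fixes f :: "'a::euclidean_space \<Rightarrow> ennreal" and s :: real
  assumes "f \<in> borel_measurable borel" "s > 0"
  shows "(\<integral>\<^sup>+x. f x \<partial>lborel) = ennreal (s ^ DIM('a)) * (\<integral>\<^sup>+x. f (s *\<^sub>R x) \<partial>lborel)"
  using assms by (subst lborel_affine[of s 0]) (simp_all add: nn_integral_density nn_integral_distr nn_integral_cmult)

lemma nn_integral_homogeneous_Gaussian:
  fixes h :: "'a::euclidean_space \<Rightarrow> real" and q s :: real
  assumes [measurable]: "h \<in> borel_measurable borel"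
    and hom: "\<And>c x. c > 0 \<Longrightarrow> h (c *\<^sub>R x) = c powr q * h x" and "s > 0"
  shows "(\<integral>\<^sup>+x. ennreal (h x * exp (- s * (x \<bullet> x))) \<partial>lborel)
    = ennreal ((2 * s) powr (- ((DIM('a) + q) / 2))) * (\<integral>\<^sup>+x. ennreal (h x * exp (- (x \<bullet> x) / 2)) \<partial>lborel)"
proof -
  define r where "r = (2 * s) powr (- 1 / 2)"
  have r: "r > 0" "s * (r * r) = 1 / 2"
    using \<open>s > 0\<close> by (simp_all add: r_def powr_add[symmetric] powr_minus field_simps)
  have scaled: "ennreal (h (r *\<^sub>R x) * exp (- s * ((r *\<^sub>R x) \<bullet> (r *\<^sub>R x))))
      = ennreal (r powr q) * ennreal (h x * exp (- (x \<bullet> x) / 2))" for x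
  proof -
    have "s * ((r *\<^sub>R x) \<bullet> (r *\<^sub>R x)) = (s * (r * r)) * (x \<bullet> x)"
      by (simp add: mult_ac)
    then have exponent: "- s * ((r *\<^sub>R x) \<bullet> (r *\<^sub>R x)) = - (x \<bullet> x) / 2"
      using r(2) by simp
    show ?thesis
      unfolding exponent using r by (simp add: hom ennreal_mult'[symmetric] mult_ac)
  qed
  have factor: "r ^ DIM('a) * r powr q = (2 * s) powr (- ((DIM('a) + q) / 2))"
  proof -
    have "r ^ DIM('a) * r powr q = r powr (DIM('a) + q)"
      using r by (simp add: powr_realpow[symmetric] powr_add)
    also have "\<dots> = (2 * s) powr (- 1 / 2 * (DIM('a) + q))"
      by (simp add: r_def powr_powr)
    finally show ?thesis by simp
  qed
  have "(\<integral>\<^sup>+x. ennreal (h x * exp (- s * (x \<bullet> x))) \<partial>lborel)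
      = ennreal (r ^ DIM('a)) * (\<integral>\<^sup>+x. ennreal (r powr q) * ennreal (h x * exp (- (x \<bullet> x) / 2)) \<partial>lborel)"
    using r by (subst nn_integral_lborel_scaleR[of _ r]) (simp_all only: scaled, measurable)
  also have "\<dots> = ennreal (r ^ DIM('a) * r powr q) * (\<integral>\<^sup>+x. ennreal (h x * exp (- (x \<bullet> x) / 2)) \<partial>lborel)"
    using r by (simp add: nn_integral_cmult ennreal_mult mult.assoc)
  also note factor
  finally show ?thesis .
qed

lemma nn_integral_Gamma_weighted_Gaussian:
  fixes h :: "'a::euclidean_space \<Rightarrow> real" and a q D t :: real
  defines "m \<equiv> (DIM('a) + q) / 2"
  assumes [measurable]: "h \<in> borel_measurable borel"
    and hom: "\<And>c x. c > 0 \<Longrightarrow> h (c *\<^sub>R x) = c powr q * h x" and "D > 0"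
  shows "(\<integral>\<^sup>+x. ennreal (indicator {0..} t * t powr (a - 1) * exp (- t) * (h x * exp (- (t / D) * (x \<bullet> x)))) \<partial>lborel)
    = ennreal (indicator {0..} t * t powr (a - m - 1) * exp (- t) * (D / 2) powr m)
      * (\<integral>\<^sup>+x. ennreal (h x * exp (- (x \<bullet> x) / 2)) \<partial>lborel)"
proof (cases "t > 0")
  case True
  let ?k = "indicator {0..} t * t powr (a - 1) * exp (- t)"
  have "?k \<ge> 0"
    by (simp add: indicator_def)
  then have "(\<integral>\<^sup>+x. ennreal (?k * (h x * exp (- (t / D) * (x \<bullet> x)))) \<partial>lborel)
      = ennreal ?k * (\<integral>\<^sup>+x. ennreal (h x * exp (- (t / D) * (x \<bullet> x))) \<partial>lborel)"
    by (simp add: ennreal_mult' nn_integral_cmult)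
  also have "\<dots> = ennreal ?k * ennreal ((2 * (t / D)) powr (- m)) * (\<integral>\<^sup>+x. ennreal (h x * exp (- (x \<bullet> x) / 2)) \<partial>lborel)"
    using nn_integral_homogeneous_Gaussian[OF _ hom, of "t / D"] True \<open>D > 0\<close>
    by (simp add: m_def mult.assoc)
  also have "ennreal ?k * ennreal ((2 * (t / D)) powr (- m))
      = ennreal (indicator {0..} t * t powr (a - m - 1) * exp (- t) * (D / 2) powr m)"
  proof -
    have "(2 * (t / D)) powr (- m) = t powr (- m) * (D / 2) powr m"
      using True \<open>D > 0\<close> by (simp add: powr_mult powr_divide powr_minus field_simps)
    moreover have "t powr (a - 1) * t powr (- m) = t powr (a - m - 1)"
      using True by (simp add: powr_add[symmetric] algebra_simps)
    ultimately show ?thesis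
      using \<open>?k \<ge> 0\<close> True by (simp add: ennreal_mult'[symmetric] mult_ac)
  qed
  finally show ?thesis .
next
  case False
  then have vanish: "indicator {0..} t * t powr (a - 1) = (0::real)" "indicator {0..} t * t powr (a - m - 1) = (0::real)"
    by (auto simp: indicator_def)
  show ?thesis
    unfolding vanish by simp
qed

lemma nn_integral_homogeneous_t_kernel:
  fixes h :: "'a::euclidean_space \<Rightarrow> real" and a q D :: real
  defines "m \<equiv> (DIM('a) + q) / 2"
  assumes [measurable]: "h \<in> borel_measurable borel"
    and hom: "\<And>c x. c > 0 \<Longrightarrow> h (c *\<^sub>R x) = c powr q * h x"
    and "D > 0" "a > 0" "a > m"
  shows "(\<integral>\<^sup>+x. ennreal (h x * (1 + x \<bullet> x / D) powr (- a)) \<partial>lborel)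
    = ennreal ((D / 2) powr m * Gamma (a - m) / Gamma a) * (\<integral>\<^sup>+x. ennreal (h x * exp (- (x \<bullet> x) / 2)) \<partial>lborel)"
proof -
  let ?J = "\<integral>\<^sup>+x. ennreal (h x * exp (- (x \<bullet> x) / 2)) \<partial>lborel"
  define k where "k t = indicator {0..} t * t powr (a - 1) * exp (- t)" for t :: real
  have k_nonneg: "k t \<ge> 0" for t
    by (simp add: k_def indicator_def)
  have Gamma_pos: "Gamma a > 0"
    using \<open>a > 0\<close> by (rule Gamma_real_pos)
  have mixture: "ennreal (h x * (1 + x \<bullet> x / D) powr (- a))
      = ennreal (1 / Gamma a) * (\<integral>\<^sup>+t. ennreal (k t * (h x * exp (- (t / D) * (x \<bullet> x)))) \<partial>lborel)" for x
  proof -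
    have "ennreal (h x * (1 + x \<bullet> x / D) powr (- a))
        = ennreal (1 / Gamma a) * (ennreal (h x) * ennreal (Gamma a * (1 + x \<bullet> x / D) powr (- a)))"
      using Gamma_pos by (simp add: ennreal_mult'[symmetric] ennreal_mult''[symmetric])
    also have "\<dots> = ennreal (1 / Gamma a)
        * (\<integral>\<^sup>+t. ennreal (h x) * ennreal (k t * exp (- (x \<bullet> x / D) * t)) \<partial>lborel)"
    proof -
      have "x \<bullet> x / D \<ge> 0"
        using \<open>D > 0\<close> by simp
      then show ?thesis
        by (simp add: Gamma_mult_powr_conv_nn_integral[OF \<open>a > 0\<close>] k_def nn_integral_cmult)
    qed
    also have "\<dots> = ennreal (1 / Gamma a) * (\<integral>\<^sup>+t. ennreal (k t * (h x * exp (- (t / D) * (x \<bullet> x)))) \<partial>lborel)"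
      using k_nonneg by (intro arg_cong2[where f = "(*)"] refl nn_integral_cong)
        (simp add: ennreal_mult''[symmetric] mult_ac)
    finally show ?thesis .
  qed
  have inner: "(\<integral>\<^sup>+x. ennreal (k t * (h x * exp (- (t / D) * (x \<bullet> x)))) \<partial>lborel)
      = ennreal (indicator {0..} t * t powr (a - m - 1) * exp (- t) * (D / 2) powr m) * ?J" for t
    unfolding k_def m_def by (rule nn_integral_Gamma_weighted_Gaussian[OF _ hom \<open>D > 0\<close>]) measurable
  have "(\<integral>\<^sup>+x. ennreal (h x * (1 + x \<bullet> x / D) powr (- a)) \<partial>lborel)
      = ennreal (1 / Gamma a) * (\<integral>\<^sup>+t. \<integral>\<^sup>+x. ennreal (k t * (h x * exp (- (t / D) * (x \<bullet> x)))) \<partial>lborel \<partial>lborel)"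
    unfolding mixture by (subst lborel_pair.Fubini') (simp_all add: k_def nn_integral_cmult)
  also have "\<dots> = ennreal (1 / Gamma a)
      * ((\<integral>\<^sup>+t. ennreal (indicator {0..} t * t powr (a - m - 1) * exp (- t) * (D / 2) powr m) \<partial>lborel) * ?J)"
    unfolding inner by (subst nn_integral_multc) auto
  also have "(\<integral>\<^sup>+t. ennreal (indicator {0..} t * t powr (a - m - 1) * exp (- t) * (D / 2) powr m) \<partial>lborel)
      = ennreal (Gamma (a - m) * (D / 2) powr m)"
    using nn_integral_Gamma_kernel[of "a - m" 1] \<open>a > m\<close>
    by (simp add: ennreal_mult'' nn_integral_multc)
  also have "ennreal (1 / Gamma a) * (ennreal (Gamma (a - m) * (D / 2) powr m) * ?J)
      = ennreal ((D / 2) powr m * Gamma (a - m) / Gamma a) * ?J"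
    using Gamma_pos by (subst mult.assoc[symmetric], subst ennreal_mult'[symmetric]) (simp_all add: mult.commute)
  finally show ?thesis .
qed

lemma integral_density_reweight:
  fixes f g w u :: "'a \<Rightarrow> real"
  assumes [measurable]: "f \<in> borel_measurable M" "g \<in> borel_measurable M" "w \<in> borel_measurable M" "u \<in> borel_measurable M"
    and "\<And>x. f x \<ge> 0" "\<And>x. g x \<ge> 0"
    and reweight: "\<And>x. w x * f x = c * g x"
    and "integrable (density M g) u"
  shows "integrable (density M f) (\<lambda>x. w x * u x)"
    and "(\<integral>x. w x * u x \<partial>density M f) = c * (\<integral>x. u x \<partial>density M g)"
proof -
  have eq: "f x * (w x * u x) = c * (g x * u x)" for x
    using reweight[of x] by (simp add: mult_ac)
  have "integrable M (\<lambda>x. g x * u x)"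
    using assms integrable_density[of u M g] by simp
  then have "integrable M (\<lambda>x. f x * (w x * u x))"
    unfolding eq by (rule integrable_mult_right)
  then show "integrable (density M f) (\<lambda>x. w x * u x)"
    using assms by (subst integrable_density) auto
  have "(\<integral>x. w x * u x \<partial>density M f) = (\<integral>x. f x * (w x * u x) \<partial>M)"
    using assms by (simp add: integral_density)
  also have "\<dots> = c * (\<integral>x. g x * u x \<partial>M)"
    unfolding eq by (rule integral_mult_right_zero)
  also have "(\<integral>x. g x * u x \<partial>M) = (\<integral>x. u x \<partial>density M g)"
    using assms by (simp add: integral_density)
  finally show "(\<integral>x. w x * u x \<partial>density M f) = c * (\<integral>x. u x \<partial>density M g)" .
qed

lemma t_std_density_scaleR_mat_1_nonneg:
  assumes "nu > 2" "c > 0"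
  shows "t_std_density nu (c *\<^sub>R mat 1 :: real^'n^'n) y \<ge> 0"
  using assms by (simp add: t_std_density_scaleR_mat_1)

lemma borel_measurable_t_std_density_scaleR_mat_1:
  assumes "nu > 2" "c > 0"
  shows "t_std_density nu (c *\<^sub>R mat 1 :: real^'n^'n) \<in> borel_measurable borel"
proof -
  have "t_std_density nu (c *\<^sub>R mat 1 :: real^'n^'n)
      = (\<lambda>y. Gamma ((nu + real CARD('n)) / 2) / Gamma (nu / 2) * (c * (nu - 2) * pi) powr (- (real CARD('n) / 2))
          * (1 + y \<bullet> y / (c * (nu - 2))) powr (- ((nu + real CARD('n)) / 2)))"
    using assms by (simp add: fun_eq_iff t_std_density_scaleR_mat_1)
  then show ?thesis
    by simp
qed

lemma nn_integral_std_normal_vec: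
  assumes [measurable]: "h \<in> borel_measurable borel"
  shows "(\<integral>\<^sup>+x. ennreal (h x) \<partial>std_normal_vec)
    = ennreal ((2 * pi) powr (- real CARD('n) / 2)) * (\<integral>\<^sup>+x. ennreal (h x * exp (- (x \<bullet> x) / 2)) \<partial>(lborel :: (real^'n) measure))"
proof -
  have "(\<integral>\<^sup>+x. ennreal (h x) \<partial>std_normal_vec)
      = (\<integral>\<^sup>+x. ennreal ((2 * pi) powr (- real CARD('n) / 2)) * ennreal (h x * exp (- (x \<bullet> x) / 2)) \<partial>(lborel :: (real^'n) measure))"
    unfolding std_normal_vec_def std_normal_vec_density_def
    by (subst nn_integral_density) (auto intro!: nn_integral_cong simp: ennreal_mult'' mult_ac)
  then show ?thesis
    by (simp add: nn_integral_cmult)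
qed

lemma powr_half_pi_rescale:
  fixes D n q :: real
  assumes "D > 0"
  shows "(D * pi) powr (- (n / 2)) * (D / 2) powr ((n + q) / 2) = (D / 2) powr (q / 2) * (2 * pi) powr (- (n / 2))"
proof -
  have "(D * pi) powr (- (n / 2)) = ((2 * pi) * (D / 2)) powr (- (n / 2))"
    by (simp add: mult.commute)
  also have "\<dots> = (2 * pi) powr (- (n / 2)) * (D / 2) powr (- (n / 2))"
    by (rule powr_mult)
  finally have "(D * pi) powr (- (n / 2)) * (D / 2) powr ((n + q) / 2)
      = (2 * pi) powr (- (n / 2)) * ((D / 2) powr (- (n / 2)) * (D / 2) powr (n / 2)) * (D / 2) powr (q / 2)"
    by (simp add: powr_add[symmetric] add_divide_distrib mult.assoc)
  then show ?thesis
    using assms by (simp add: powr_minus mult.commute)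
qed

lemma nn_integral_t_std_homogeneous:
  fixes h :: "real^'n \<Rightarrow> real" and nu c q :: real
  assumes [measurable]: "h \<in> borel_measurable borel"
    and hom: "\<And>c x. c > 0 \<Longrightarrow> h (c *\<^sub>R x) = c powr q * h x"
    and "nu > 2" "c > 0" "q < nu"
  shows "(\<integral>\<^sup>+x. ennreal (h x) \<partial>t_std nu (c *\<^sub>R mat 1))
    = ennreal ((c * (nu - 2) / 2) powr (q / 2) * Gamma ((nu - q) / 2) / Gamma (nu / 2))
      * (\<integral>\<^sup>+x. ennreal (h x) \<partial>std_normal_vec)"
proof -
  define n where "n = real CARD('n)"
  define D where "D = c * (nu - 2)"
  define C where "C = Gamma ((nu + n) / 2) / Gamma (nu / 2) * (D * pi) powr (- (n / 2))"
  let ?J = "\<integral>\<^sup>+x. ennreal (h x * exp (- (x \<bullet> x) / 2)) \<partial>(lborel :: (real^'n) measure)"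
  have D: "D > 0"
    using assms by (simp add: D_def)
  have Gamma_pos: "Gamma (nu / 2) > 0" "Gamma ((nu + n) / 2) > 0" "Gamma ((nu - q) / 2) > 0"
    using assms by (simp_all add: n_def)
  have C: "C \<ge> 0"
    using D Gamma_pos by (simp add: C_def)
  have "(\<integral>\<^sup>+x. ennreal (h x) \<partial>t_std nu (c *\<^sub>R mat 1))
      = (\<integral>\<^sup>+x. ennreal (C * (1 + x \<bullet> x / D) powr (- ((nu + n) / 2))) * ennreal (h x) \<partial>lborel)"
    unfolding t_std_def using assms
    by (subst nn_integral_density) (simp_all add: t_std_density_scaleR_mat_1 C_def D_def n_def mult.assoc)
  also have "\<dots> = (\<integral>\<^sup>+x. ennreal C * ennreal (h x * (1 + x \<bullet> x / D) powr (- ((nu + n) / 2))) \<partial>lborel)"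
    using C by (intro nn_integral_cong) (simp add: ennreal_mult' ennreal_mult'' mult_ac)
  also have "\<dots> = ennreal C * ennreal ((D / 2) powr ((n + q) / 2) * Gamma ((nu - q) / 2) / Gamma ((nu + n) / 2)) * ?J"
  proof -
    have "(nu + real CARD('n)) / 2 - (real CARD('n) + q) / 2 = (nu - q) / 2"
      by (simp add: field_simps)
    with nn_integral_homogeneous_t_kernel[OF _ hom D, of "(nu + n) / 2"] assms show ?thesis
      by (simp add: nn_integral_cmult n_def mult.assoc)
  qed
  also have "\<dots> = ennreal ((D / 2) powr (q / 2) * Gamma ((nu - q) / 2) / Gamma (nu / 2))
      * (ennreal ((2 * pi) powr (- (n / 2))) * ?J)"
  proof -
    have "C * ((D / 2) powr ((n + q) / 2) * Gamma ((nu - q) / 2) / Gamma ((nu + n) / 2))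
        = (D / 2) powr (q / 2) * Gamma ((nu - q) / 2) / Gamma (nu / 2) * (2 * pi) powr (- (n / 2))"
      using Gamma_pos powr_half_pi_rescale[OF D, of n q] by (simp add: C_def field_simps)
    moreover have "(D / 2) powr ((n + q) / 2) * Gamma ((nu - q) / 2) / Gamma ((nu + n) / 2) \<ge> 0"
      "(D / 2) powr (q / 2) * Gamma ((nu - q) / 2) / Gamma (nu / 2) \<ge> 0"
      using Gamma_pos by simp_all
    ultimately have "ennreal C * ennreal ((D / 2) powr ((n + q) / 2) * Gamma ((nu - q) / 2) / Gamma ((nu + n) / 2))
        = ennreal ((D / 2) powr (q / 2) * Gamma ((nu - q) / 2) / Gamma (nu / 2)) * ennreal ((2 * pi) powr (- (n / 2)))"
      using C by (simp add: ennreal_mult[symmetric])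
    then show ?thesis
      by (simp only: mult.assoc[symmetric])
  qed
  finally show ?thesis
    by (simp add: nn_integral_std_normal_vec D_def n_def)
qed

lemma integral_t_std_homogeneous:
  fixes g :: "real^'n \<Rightarrow> real" and nu c q :: real
  assumes [measurable]: "g \<in> borel_measurable borel"
    and hom: "\<And>c x. c > 0 \<Longrightarrow> g (c *\<^sub>R x) = c powr q * g x"
    and "nu > 2" "c > 0" "q < nu"
    and "integrable (t_std nu (c *\<^sub>R mat 1)) g" "integrable std_normal_vec g"
  shows "(\<integral>x. g x \<partial>t_std nu (c *\<^sub>R mat 1))
    = (c * (nu - 2) / 2) powr (q / 2) * Gamma ((nu - q) / 2) / Gamma (nu / 2) * (\<integral>x. g x \<partial>std_normal_vec)"
proof -
  let ?K = "(c * (nu - 2) / 2) powr (q / 2) * Gamma ((nu - q) / 2) / Gamma (nu / 2)"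
  have "?K \<ge> 0"
    using assms by simp
  moreover have "(\<integral>\<^sup>+x. ennreal (g x) \<partial>t_std nu (c *\<^sub>R mat 1)) = ennreal ?K * (\<integral>\<^sup>+x. ennreal (g x) \<partial>std_normal_vec)"
    using assms by (intro nn_integral_t_std_homogeneous[OF _ hom]) auto
  moreover have "(\<integral>\<^sup>+x. ennreal (- g x) \<partial>t_std nu (c *\<^sub>R mat 1)) = ennreal ?K * (\<integral>\<^sup>+x. ennreal (- g x) \<partial>std_normal_vec)"
    using assms by (intro nn_integral_t_std_homogeneous) (auto simp: hom)
  ultimately show ?thesis
    using assms by (simp add: real_lebesgue_integral_def enn2real_mult right_diff_distrib)
qed

lemma t_std_density_tilt:
  fixes nu p :: real
  assumes "nu > 2" "p > 2 - nu"
  shows "((nu + CARD('n)) / (nu - 2 + x \<bullet> x)) powr (p / 2) * t_std_density nu (mat 1 :: real^'n^'n) x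
    = zeta nu CARD('n) p 0 * t_std_density (nu + p) (((nu - 2) / (nu + p - 2)) *\<^sub>R mat 1 :: real^'n^'n) x"
proof -
  define n where "n = real CARD('n)"
  define u where "u = 1 + x \<bullet> x / (nu - 2)"
  have u: "u > 0"
    using assms by (simp add: u_def add_pos_nonneg)
  have "nu - 2 + x \<bullet> x = (nu - 2) * u"
    using assms by (simp add: u_def field_simps)
  then have "((nu + n) / (nu - 2 + x \<bullet> x)) powr (p / 2) = (((nu + n) / (nu - 2)) / u) powr (p / 2)"
    by simp
  also have "\<dots> = ((nu + n) / (nu - 2)) powr (p / 2) / u powr (p / 2)"
    by (rule powr_divide)
  finally have W: "((nu + n) / (nu - 2 + x \<bullet> x)) powr (p / 2) = ((nu + n) / (nu - 2)) powr (p / 2) * u powr (- (p / 2))"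
    by (simp add: powr_minus_divide)
  have fX: "t_std_density nu (mat 1 :: real^'n^'n) x
      = Gamma ((nu + n) / 2) / Gamma (nu / 2) * ((nu - 2) * pi) powr (- (n / 2)) * u powr (- ((nu + n) / 2))"
    using t_std_density_scaleR_mat_1[of nu 1 x] assms by (simp add: n_def u_def)
  have "(nu - 2) / (nu + p - 2) * (nu + p - 2) = nu - 2"
    using assms by simp
  then have fY: "t_std_density (nu + p) (((nu - 2) / (nu + p - 2)) *\<^sub>R mat 1 :: real^'n^'n) x
      = Gamma ((nu + p + n) / 2) / Gamma ((nu + p) / 2) * ((nu - 2) * pi) powr (- (n / 2)) * u powr (- ((nu + p + n) / 2))"
    using t_std_density_scaleR_mat_1[of "nu + p" "(nu - 2) / (nu + p - 2)" x] assms
    by (simp add: n_def u_def add_ac)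
  have "- (p / 2) + - ((nu + n) / 2) = - ((nu + p + n) / 2)"
    by (simp add: field_simps)
  then have u_powr: "u powr (- (p / 2)) * u powr (- ((nu + n) / 2)) = u powr (- ((nu + p + n) / 2))"
    by (simp only: powr_add[symmetric])
  have "Gamma ((nu + p) / 2) > 0" "Gamma ((nu + p + n) / 2) > 0"
    using assms by (simp_all add: n_def add_pos_nonneg)
  then have Gamma_cancel: "Gamma ((nu + p) / 2) / Gamma ((nu + p + n) / 2) * (Gamma ((nu + p + n) / 2) / Gamma ((nu + p) / 2)) = 1"
    by simp
  have zeta: "zeta nu CARD('n) p 0
      = ((nu + n) / (nu - 2)) powr (p / 2) * (Gamma ((nu + n) / 2) / Gamma (nu / 2))
        * (Gamma ((nu + p) / 2) / Gamma ((nu + p + n) / 2))"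
    using assms by (simp add: zeta_def n_def)
  show ?thesis
    unfolding n_def[symmetric] W fX fY zeta
    by (simp only: mult_ac u_powr[symmetric] Gamma_cancel mult_1_right)
qed

lemma integral_t_std_tilt:
  fixes nu p :: real and g :: "real^'n \<Rightarrow> real"
  assumes "nu > 2" "p > 2 - nu" and [measurable]: "g \<in> borel_measurable borel"
    and "integrable (t_std (nu + p) (((nu - 2) / (nu + p - 2)) *\<^sub>R mat 1)) g"
  shows "integrable (t_std nu (mat 1)) (\<lambda>x. ((nu + CARD('n)) / (nu - 2 + x \<bullet> x)) powr (p / 2) * g x)"
    and "(\<integral>x. ((nu + CARD('n)) / (nu - 2 + x \<bullet> x)) powr (p / 2) * g x \<partial>t_std nu (mat 1))
      = zeta nu CARD('n) p 0 * (\<integral>y. g y \<partial>t_std (nu + p) (((nu - 2) / (nu + p - 2)) *\<^sub>R mat 1))"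
proof -
  let ?c = "(nu - 2) / (nu + p - 2)"
  have "?c > 0"
    using assms by simp
  have weights: "(\<lambda>x::real^'n. ((nu + CARD('n)) / (nu - 2 + x \<bullet> x)) powr (p / 2)) \<in> borel_measurable lborel"
      "g \<in> borel_measurable lborel"
    by measurable
  have fX: "t_std_density nu (mat 1 :: real^'n^'n) \<in> borel_measurable lborel"
      "\<And>x. t_std_density nu (mat 1 :: real^'n^'n) x \<ge> 0"
    using borel_measurable_t_std_density_scaleR_mat_1[of nu 1] t_std_density_scaleR_mat_1_nonneg[of nu 1] assms
    by simp_all
  have fY: "t_std_density (nu + p) (?c *\<^sub>R mat 1 :: real^'n^'n) \<in> borel_measurable lborel"
      "\<And>x. t_std_density (nu + p) (?c *\<^sub>R mat 1 :: real^'n^'n) x \<ge> 0"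
    using borel_measurable_t_std_density_scaleR_mat_1[of "nu + p" ?c]
      t_std_density_scaleR_mat_1_nonneg[of "nu + p" ?c] \<open>?c > 0\<close> assms
    by simp_all
  note reweight = integral_density_reweight[OF fX(1) fY(1) weights fX(2) fY(2) t_std_density_tilt[OF assms(1,2)]]
  show "integrable (t_std nu (mat 1)) (\<lambda>x. ((nu + CARD('n)) / (nu - 2 + x \<bullet> x)) powr (p / 2) * g x)"
    using reweight(1) assms(4) unfolding t_std_def by simp
  show "(\<integral>x. ((nu + CARD('n)) / (nu - 2 + x \<bullet> x)) powr (p / 2) * g x \<partial>t_std nu (mat 1))
      = zeta nu CARD('n) p 0 * (\<integral>y. g y \<partial>t_std (nu + p) (((nu - 2) / (nu + p - 2)) *\<^sub>R mat 1))"
    using reweight(2) assms(4) unfolding t_std_def by simp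
qed

lemma integral_t_std_tilt_homogeneous:
  fixes nu p q :: real and g :: "real^'n \<Rightarrow> real"
  assumes "nu > 2" "p > 2 - nu" "q < nu + p" and [measurable]: "g \<in> borel_measurable borel"
    and hom: "\<And>c x. c > 0 \<Longrightarrow> g (c *\<^sub>R x) = c powr q * g x"
    and "integrable (t_std (nu + p) (((nu - 2) / (nu + p - 2)) *\<^sub>R mat 1)) g" "integrable std_normal_vec g"
  shows "(\<integral>x. ((nu + CARD('n)) / (nu - 2 + x \<bullet> x)) powr (p / 2) * g x \<partial>t_std nu (mat 1))
    = zeta nu CARD('n) p q * (\<integral>z. g z \<partial>std_normal_vec)"
proof -
  define K where "K = ((nu - 2) / 2) powr (q / 2) * Gamma ((nu + p - q) / 2) / Gamma ((nu + p) / 2)"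
  have "(nu + p) / 2 > 0"
    using assms by simp
  then have "Gamma ((nu + p) / 2) \<noteq> 0"
    by (metis Gamma_real_pos less_irrefl)
  then have zeta: "zeta nu CARD('n) p 0 * K = zeta nu CARD('n) p q"
    using assms by (simp add: zeta_def K_def)
  have "(\<integral>y. g y \<partial>t_std (nu + p) (((nu - 2) / (nu + p - 2)) *\<^sub>R mat 1))
      = ((nu - 2) / (nu + p - 2) * (nu + p - 2) / 2) powr (q / 2) * Gamma ((nu + p - q) / 2) / Gamma ((nu + p) / 2)
        * (\<integral>z. g z \<partial>std_normal_vec)"
    using assms by (intro integral_t_std_homogeneous[OF _ hom]) auto
  also have "\<dots> = K * (\<integral>z. g z \<partial>std_normal_vec)"
    using assms by (simp add: K_def)
  finally show ?thesis
    using integral_t_std_tilt(2)[OF assms(1,2,4,6)] by (simp only: mult.assoc[symmetric] zeta)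
qed

theorem lemmaA1:
  fixes nu :: real
  assumes nu: "nu > 2"
  defines "W \<equiv> (\<lambda>x::real^'n. (nu + real CARD('n)) / (nu - 2 + x \<bullet> x))"
  shows
    "(\<forall>p (g :: real^'n \<Rightarrow> real).
        p > 2 - nu \<and> g \<in> borel_measurable borel
        \<and> integrable (t_std (nu + p) (((nu - 2) / (nu + p - 2)) *\<^sub>R mat 1)) g
        \<longrightarrow> integrable (t_std nu (mat 1)) (\<lambda>x. W x powr (p / 2) * g x)
          \<and> (\<integral>x. W x powr (p / 2) * g x \<partial>t_std nu (mat 1))
             = zeta nu CARD('n) p 0
               * (\<integral>y. g y \<partial>t_std (nu + p) (((nu - 2) / (nu + p - 2)) *\<^sub>R mat 1)))
     \<and> (\<forall>p q (g :: real^'n \<Rightarrow> real).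
        p > 2 - nu \<and> g \<in> borel_measurable borel
        \<and> integrable (t_std (nu + p) (((nu - 2) / (nu + p - 2)) *\<^sub>R mat 1)) g
        \<and> q < nu + p \<and> (\<forall>c>0. \<forall>x. g (c *\<^sub>R x) = c powr q * g x)
        \<and> integrable std_normal_vec g
        \<longrightarrow> integrable (t_std nu (mat 1)) (\<lambda>x. W x powr (p / 2) * g x)
          \<and> (\<integral>x. W x powr (p / 2) * g x \<partial>t_std nu (mat 1))
             = zeta nu CARD('n) p q * (\<integral>z. g z \<partial>std_normal_vec))"
  unfolding W_def
  by (auto intro: integral_t_std_tilt[OF nu] integral_t_std_tilt_homogeneous[OF nu])

end
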